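(* Let $T_1,T_2$ be tables joined on column $J$, with frequencies $a_v$ and $b_v$ for $v\in\mathcal U$. Let $0<p_1,q_1,p_2,q_2\le 1$, let $S_1=\mathrm{UBS}_{p_1,q_1}(T_1,J)$ and $S_2=\mathrm{UBS}_{p_2,q_2}(T_2,J)$ be produced with a common hash function $h$, let $p=\min\{p_1,p_2\}$, and let $\hat J_{\mathrm{count}} = \frac{1}{p\,q_1q_2}|S_1\bowtie_J S_2|$. Then $$\mathrm{Var}(\hat J_{\mathrm{count}}) = \frac{1-p}{p}\gamma_{2,2} + \frac{1-q_2}{p q_2}\gamma_{2,1} + \frac{1-q_1}{p q_1}\gamma_{1,2} + \frac{(1-q_1)(1-q_2)}{p q_1 q_2}\gamma_{1,1},$$ where $\gamma_{i,j}=\sum_{v\in\mathcal U} a_v^i b_v^j$.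
   Context: $T_1,T_2$ are finite multisets of tuples, each having a join attribute $J$ taking values in a finite set $\mathcal U$; $a_v$ (resp. $b_v$) is the number of tuples of $T_1$ (resp. $T_2$) whose $J$-value is $v$. $S_1\bowtie_J S_2$ is the set of pairs $(t_1,t_2)\in S_1\times S_2$ with $t_1.J=t_2.J$. Universe-Bernoulli sampling $\mathrm{UBS}_{p,q}(T,J)$: given a hash function $h:\mathcal U\to[0,1]$, each tuple $t\in T$ with $h(t.J)<p$ is included in the sample independently with probability $q$; all other tuples are excluded. The hash function is perfect: the values $h(v)$, $v\in\mathcal U$, are independent and uniform on $[0,1]$; the same $h$ is used for both tables; the Bernoulli inclusion coins are independent across all tuples of both tables and independent of $h$. *)

theory Defs
  imports "HOL-Probability.Probability"
begin

text \<open>A table is a finite set of row identifiers T together with the join-attribute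
  map J giving the J-value of each row (this represents a finite multiset of tuples).\<close>

definition freq :: "'r set \<Rightarrow> ('r \<Rightarrow> 'u) \<Rightarrow> 'u \<Rightarrow> nat" where
  "freq T J v = card {t \<in> T. J t = v}"

definition gamma :: "'u set \<Rightarrow> ('u \<Rightarrow> nat) \<Rightarrow> ('u \<Rightarrow> nat) \<Rightarrow> nat \<Rightarrow> nat \<Rightarrow> real" where
  "gamma U a b i j = (\<Sum>v\<in>U. real (a v) ^ i * real (b v) ^ j)"

text \<open>Probability space: a perfect hash h (independent uniform values on [0,1] for each
  v in U), and independent Bernoulli inclusion coins for every row of both tables.\<close>

definition ubs_space ::
  "'u set \<Rightarrow> 'r1 set \<Rightarrow> 'r2 set \<Rightarrow> real \<Rightarrow> real \<Rightarrow>
     (('u \<Rightarrow> real) \<times> ('r1 \<Rightarrow> bool) \<times> ('r2 \<Rightarrow> bool)) measure" where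
  "ubs_space U T1 T2 q1 q2 =
     (\<Pi>\<^sub>M v\<in>U. uniform_measure lborel {0..1::real}) \<Otimes>\<^sub>M
     ((\<Pi>\<^sub>M t\<in>T1. measure_pmf (bernoulli_pmf q1)) \<Otimes>\<^sub>M
      (\<Pi>\<^sub>M t\<in>T2. measure_pmf (bernoulli_pmf q2)))"

definition ubs :: "'r set \<Rightarrow> ('r \<Rightarrow> 'u) \<Rightarrow> real \<Rightarrow> ('u \<Rightarrow> real) \<Rightarrow> ('r \<Rightarrow> bool) \<Rightarrow> 'r set" where
  "ubs T J p h c = {t \<in> T. h (J t) < p \<and> c t}"

definition join_card :: "'r1 set \<Rightarrow> ('r1 \<Rightarrow> 'u) \<Rightarrow> 'r2 set \<Rightarrow> ('r2 \<Rightarrow> 'u) \<Rightarrow> nat" where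
  "join_card S1 J1 S2 J2 = card {(t1, t2) \<in> S1 \<times> S2. J1 t1 = J2 t2}"

end

theory Submission
  imports Defs
begin

text \<open>With a common hash the join size splits over join values:
  \<open>|S\<^sub>1 \<bowtie> S\<^sub>2| = \<Sum>\<^sub>v Z\<^sub>v A\<^sub>v B\<^sub>v\<close>, where \<open>Z\<^sub>v = [h v < min p\<^sub>1 p\<^sub>2]\<close> and \<open>A\<^sub>v\<close>, \<open>B\<^sub>v\<close>
  count the rows of value \<open>v\<close> whose coins came up heads. The three factors live on independent
  components of the probability space, and for \<open>v \<noteq> w\<close> the terms read disjoint coordinates of
  each component, so they are uncorrelated and the variance is \<open>\<Sum>\<^sub>v Var(Z\<^sub>v A\<^sub>v B\<^sub>v)\<close>.
  Each summand is \<open>E[Z\<^sub>v] E[A\<^sub>v\<^sup>2] E[B\<^sub>v\<^sup>2] - (p q\<^sub>1 q\<^sub>2 a\<^sub>v b\<^sub>v)\<^sup>2\<close> with the binomial second moment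
  \<open>E[A\<^sub>v\<^sup>2] = q\<^sub>1\<^sup>2 a\<^sub>v\<^sup>2 + q\<^sub>1 (1 - q\<^sub>1) a\<^sub>v\<close>; dividing by \<open>(p q\<^sub>1 q\<^sub>2)\<^sup>2\<close> and expanding gives the
  four \<open>\<gamma>\<close> terms.\<close>

lemma (in pair_sigma_finite)
  fixes f :: "'a \<Rightarrow> real" and g :: "'b \<Rightarrow> real"
  assumes f: "integrable M1 f" and g: "integrable M2 g"
  shows integrable_pair_measure_mult: "integrable (M1 \<Otimes>\<^sub>M M2) (\<lambda>z. f (fst z) * g (snd z))"
    and integral_pair_measure_mult:
      "(\<integral>z. f (fst z) * g (snd z) \<partial>(M1 \<Otimes>\<^sub>M M2)) = integral\<^sup>L M1 f * integral\<^sup>L M2 g"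
proof -
  show int: "integrable (M1 \<Otimes>\<^sub>M M2) (\<lambda>z. f (fst z) * g (snd z))"
  proof (rule Fubini_integrable)
    show "integrable M1 (\<lambda>x. \<integral>y. norm (f (fst (x, y)) * g (snd (x, y))) \<partial>M2)"
      using f by (simp add: abs_mult)
    show "AE x in M1. integrable M2 (\<lambda>y. f (fst (x, y)) * g (snd (x, y)))"
      using g by simp
  qed (use f g in measurable)
  show "(\<integral>z. f (fst z) * g (snd z) \<partial>(M1 \<Otimes>\<^sub>M M2)) = integral\<^sup>L M1 f * integral\<^sup>L M2 g"
    using integral_fst'[OF int] by simp
qed

lemma (in product_prob_space)
  fixes f :: "'i \<Rightarrow> 'a \<Rightarrow> real"
  assumes I: "finite I" and K: "K \<subseteq> I" and f: "\<And>k. k \<in> K \<Longrightarrow> integrable (M k) (f k)"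
  shows integrable_PiM_prod_subset: "integrable (Pi\<^sub>M I M) (\<lambda>x. \<Prod>k\<in>K. f k (x k))"
    and integral_PiM_prod_subset: "(\<integral>x. (\<Prod>k\<in>K. f k (x k)) \<partial>Pi\<^sub>M I M) = (\<Prod>k\<in>K. integral\<^sup>L (M k) (f k))"
proof -
  define g where "g k = (if k \<in> K then f k else (\<lambda>_. 1))" for k
  have g: "integrable (M k) (g k)" if "k \<in> I" for k
    using f by (simp add: g_def)
  have prod_g: "(\<Prod>k\<in>I. g k (x k)) = (\<Prod>k\<in>K. f k (x k))" for x
    by (subst prod.mono_neutral_right[OF I K]) (simp_all add: g_def)
  have "(\<Prod>k\<in>I. integral\<^sup>L (M k) (g k)) = (\<Prod>k\<in>K. integral\<^sup>L (M k) (f k))"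
    by (subst prod.mono_neutral_right[OF I K]) (simp_all add: g_def M.prob_space)
  then show "(\<integral>x. (\<Prod>k\<in>K. f k (x k)) \<partial>Pi\<^sub>M I M) = (\<Prod>k\<in>K. integral\<^sup>L (M k) (f k))"
    using product_integral_prod[OF I g] by (simp add: prod_g)
  show "integrable (Pi\<^sub>M I M) (\<lambda>x. \<Prod>k\<in>K. f k (x k))"
    using product_integrable_prod[OF I g] by (simp add: prod_g)
qed

lemma
  fixes f :: "'a \<Rightarrow> real"
  assumes M: "prob_space M" and I: "finite I" "i \<in> I" and f: "integrable M f"
  shows integrable_PiM_coordinate: "integrable (\<Pi>\<^sub>M k\<in>I. M) (\<lambda>x. f (x i))"
    and integral_PiM_coordinate: "(\<integral>x. f (x i) \<partial>(\<Pi>\<^sub>M k\<in>I. M)) = integral\<^sup>L M f"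
proof -
  interpret product_prob_space "\<lambda>_. M" I
    using M by (simp add: product_prob_space_def product_prob_space_axioms_def
        product_sigma_finite_def prob_space_imp_sigma_finite)
  show "integrable (\<Pi>\<^sub>M k\<in>I. M) (\<lambda>x. f (x i))"
    using integrable_PiM_prod_subset[OF I(1), of "{i}" "\<lambda>_. f"] I f by simp
  show "(\<integral>x. f (x i) \<partial>(\<Pi>\<^sub>M k\<in>I. M)) = integral\<^sup>L M f"
    using integral_PiM_prod_subset[OF I(1), of "{i}" "\<lambda>_. f"] I f by simp
qed

lemma
  fixes f :: "'a \<Rightarrow> real"
  assumes M: "prob_space M" and I: "finite I" "i \<in> I" "j \<in> I"
    and f: "integrable M f" and f2: "integrable M (\<lambda>y. (f y)\<^sup>2)"
  shows integrable_PiM_coordinate_mult: "integrable (\<Pi>\<^sub>M k\<in>I. M) (\<lambda>x. f (x i) * f (x j))"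
    and integral_PiM_coordinate_mult: "(\<integral>x. f (x i) * f (x j) \<partial>(\<Pi>\<^sub>M k\<in>I. M)) =
      (if i = j then (\<integral>y. (f y)\<^sup>2 \<partial>M) else (integral\<^sup>L M f)\<^sup>2)"
proof -
  interpret product_prob_space "\<lambda>_. M" I
    using M by (simp add: product_prob_space_def product_prob_space_axioms_def
        product_sigma_finite_def prob_space_imp_sigma_finite)
  have "integrable (\<Pi>\<^sub>M k\<in>I. M) (\<lambda>x. f (x i) * f (x j)) \<and>
      (\<integral>x. f (x i) * f (x j) \<partial>(\<Pi>\<^sub>M k\<in>I. M)) =
      (if i = j then (\<integral>y. (f y)\<^sup>2 \<partial>M) else (integral\<^sup>L M f)\<^sup>2)"
  proof (cases "i = j")
    case True
    then show ?thesis
      using integrable_PiM_prod_subset[OF I(1), of "{i}" "\<lambda>_ y. (f y)\<^sup>2"]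
        integral_PiM_prod_subset[OF I(1), of "{i}" "\<lambda>_ y. (f y)\<^sup>2"] I f2
      by (simp add: power2_eq_square)
  next
    case False
    then show ?thesis
      using integrable_PiM_prod_subset[OF I(1), of "{i, j}" "\<lambda>_. f"]
        integral_PiM_prod_subset[OF I(1), of "{i, j}" "\<lambda>_. f"] I f
      by (simp add: power2_eq_square)
  qed
  then show "integrable (\<Pi>\<^sub>M k\<in>I. M) (\<lambda>x. f (x i) * f (x j))"
    and "(\<integral>x. f (x i) * f (x j) \<partial>(\<Pi>\<^sub>M k\<in>I. M)) =
      (if i = j then (\<integral>y. (f y)\<^sup>2 \<partial>M) else (integral\<^sup>L M f)\<^sup>2)"
    by auto
qed

lemma
  fixes f :: "'a \<Rightarrow> real"
  assumes M: "prob_space M" and I: "finite I" "S \<subseteq> I" "S' \<subseteq> I"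
    and f: "integrable M f" and f2: "integrable M (\<lambda>y. (f y)\<^sup>2)"
  shows integrable_PiM_sum_coordinates_mult:
      "integrable (\<Pi>\<^sub>M k\<in>I. M) (\<lambda>x. (\<Sum>i\<in>S. f (x i)) * (\<Sum>j\<in>S'. f (x j)))"
    and integral_PiM_sum_coordinates_mult:
      "(\<integral>x. (\<Sum>i\<in>S. f (x i)) * (\<Sum>j\<in>S'. f (x j)) \<partial>(\<Pi>\<^sub>M k\<in>I. M)) =
        real (card S * card S') * (integral\<^sup>L M f)\<^sup>2
        + real (card (S \<inter> S')) * ((\<integral>y. (f y)\<^sup>2 \<partial>M) - (integral\<^sup>L M f)\<^sup>2)"
proof -
  have S: "finite S" "finite S'" using I finite_subset by auto
  have int: "integrable (\<Pi>\<^sub>M k\<in>I. M) (\<lambda>x. f (x i) * f (x j))" if "i \<in> S" "j \<in> S'" for i j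
    using integrable_PiM_coordinate_mult[OF M I(1) _ _ f f2] I that by auto
  then show "integrable (\<Pi>\<^sub>M k\<in>I. M) (\<lambda>x. (\<Sum>i\<in>S. f (x i)) * (\<Sum>j\<in>S'. f (x j)))"
    by (simp add: sum_product)
  let ?m = "integral\<^sup>L M f" and ?m2 = "\<integral>y. (f y)\<^sup>2 \<partial>M"
  have "(\<integral>x. (\<Sum>i\<in>S. f (x i)) * (\<Sum>j\<in>S'. f (x j)) \<partial>(\<Pi>\<^sub>M k\<in>I. M)) =
      (\<Sum>i\<in>S. \<Sum>j\<in>S'. \<integral>x. f (x i) * f (x j) \<partial>(\<Pi>\<^sub>M k\<in>I. M))"
    using int by (simp add: sum_product integral_sum integrable_sum)
  also have "\<dots> = (\<Sum>i\<in>S. \<Sum>j\<in>S'. if i = j then ?m2 else ?m\<^sup>2)"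
    using I by (intro sum.cong refl integral_PiM_coordinate_mult[OF M I(1) _ _ f f2]) auto
  also have "\<dots> = (\<Sum>i\<in>S. \<Sum>j\<in>S'. ?m\<^sup>2 + (if i = j then ?m2 - ?m\<^sup>2 else 0))"
    by (intro sum.cong) auto
  also have "\<dots> = real (card S * card S') * ?m\<^sup>2 + real (card (S \<inter> S')) * (?m2 - ?m\<^sup>2)"
    using S by (simp add: sum.distrib sum.If_cases Int_def conj_commute)
  finally show "(\<integral>x. (\<Sum>i\<in>S. f (x i)) * (\<Sum>j\<in>S'. f (x j)) \<partial>(\<Pi>\<^sub>M k\<in>I. M)) =
        real (card S * card S') * ?m\<^sup>2 + real (card (S \<inter> S')) * (?m2 - ?m\<^sup>2)" .
qed

lemma (in prob_space) variance_sum_pairwise_uncorrelated: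
  fixes X :: "'i \<Rightarrow> 'a \<Rightarrow> real"
  assumes I: "finite I"
    and int: "\<And>i. i \<in> I \<Longrightarrow> integrable M (X i)"
    and int_mult: "\<And>i j. i \<in> I \<Longrightarrow> j \<in> I \<Longrightarrow> integrable M (\<lambda>x. X i x * X j x)"
    and uncorrelated: "\<And>i j. i \<in> I \<Longrightarrow> j \<in> I \<Longrightarrow> i \<noteq> j \<Longrightarrow>
      expectation (\<lambda>x. X i x * X j x) = expectation (X i) * expectation (X j)"
  shows "variance (\<lambda>x. \<Sum>i\<in>I. X i x) = (\<Sum>i\<in>I. variance (X i))"
proof -
  have square: "(\<Sum>i\<in>I. X i x)\<^sup>2 = (\<Sum>i\<in>I. \<Sum>j\<in>I. X i x * X j x)" for x
    by (simp add: power2_eq_square sum_product)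
  have var: "variance (X i) = expectation (\<lambda>x. X i x * X i x) - (expectation (X i))\<^sup>2" if "i \<in> I" for i
  proof -
    have "integrable M (\<lambda>x. (X i x)\<^sup>2)"
      using int_mult[OF that that] by (simp add: power2_eq_square)
    from variance_eq[OF int[OF that] this] show ?thesis
      by (simp only: power2_eq_square)
  qed
  have "expectation (\<lambda>x. (\<Sum>i\<in>I. X i x)\<^sup>2) =
      (\<Sum>i\<in>I. \<Sum>j\<in>I. expectation (X i) * expectation (X j) +
        (if i = j then variance (X i) else 0))"
    unfolding square using int_mult uncorrelated var
    by (auto simp: integral_sum integrable_sum power2_eq_square intro!: sum.cong)
  also have "\<dots> = (expectation (\<lambda>x. \<Sum>i\<in>I. X i x))\<^sup>2 + (\<Sum>i\<in>I. variance (X i))"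
    using I int by (simp add: sum.distrib integral_sum power2_eq_square sum_product)
  finally have "expectation (\<lambda>x. (\<Sum>i\<in>I. X i x)\<^sup>2) =
      (expectation (\<lambda>x. \<Sum>i\<in>I. X i x))\<^sup>2 + (\<Sum>i\<in>I. variance (X i))" .
  moreover have "integrable M (\<lambda>x. \<Sum>i\<in>I. X i x)" "integrable M (\<lambda>x. (\<Sum>i\<in>I. X i x)\<^sup>2)"
    using int int_mult by (simp_all add: square)
  ultimately show ?thesis
    using variance_eq by simp
qed

lemma (in prob_space) variance_divide:
  fixes X :: "'a \<Rightarrow> real"
  shows "variance (\<lambda>x. X x / c) = variance X / c\<^sup>2"
  by (simp add: diff_divide_distrib[symmetric] power_divide)

definition hash_space :: "'u set \<Rightarrow> ('u \<Rightarrow> real) measure" where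
  "hash_space U = (\<Pi>\<^sub>M v\<in>U. uniform_measure lborel {0..1::real})"

definition coin_space :: "'r set \<Rightarrow> real \<Rightarrow> ('r \<Rightarrow> bool) measure" where
  "coin_space T q = (\<Pi>\<^sub>M t\<in>T. measure_pmf (bernoulli_pmf q))"

lemma ubs_space_eq:
  "ubs_space U T1 T2 q1 q2 = hash_space U \<Otimes>\<^sub>M (coin_space T1 q1 \<Otimes>\<^sub>M coin_space T2 q2)"
  by (simp add: ubs_space_def hash_space_def coin_space_def)

lemma prob_space_hash_space: "prob_space (hash_space U)"
  unfolding hash_space_def by (intro prob_space_PiM prob_space_uniform_measure) auto

lemma prob_space_coin_space: "prob_space (coin_space T q)"
  unfolding coin_space_def by (intro prob_space_PiM prob_space_measure_pmf)

lemma prob_space_ubs_space: "prob_space (ubs_space U T1 T2 q1 q2)"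
  unfolding ubs_space_eq by (intro prob_space_pair prob_space_hash_space prob_space_coin_space)

lemma
  fixes f :: "('u \<Rightarrow> real) \<Rightarrow> real" and g :: "('r1 \<Rightarrow> bool) \<Rightarrow> real" and k :: "('r2 \<Rightarrow> bool) \<Rightarrow> real"
  assumes f: "integrable (hash_space U) f"
    and g: "integrable (coin_space T1 q1) g" and k: "integrable (coin_space T2 q2) k"
  shows integrable_ubs_space_mult:
      "integrable (ubs_space U T1 T2 q1 q2) (\<lambda>(h, c1, c2). f h * g c1 * k c2)"
    and integral_ubs_space_mult:
      "(\<integral>(h, c1, c2). f h * g c1 * k c2 \<partial>ubs_space U T1 T2 q1 q2) =
        integral\<^sup>L (hash_space U) f * integral\<^sup>L (coin_space T1 q1) g * integral\<^sup>L (coin_space T2 q2) k"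
proof -
  interpret H: prob_space "hash_space U" by (rule prob_space_hash_space)
  interpret C1: prob_space "coin_space T1 q1" by (rule prob_space_coin_space)
  interpret C2: prob_space "coin_space T2 q2" by (rule prob_space_coin_space)
  interpret C: pair_prob_space "coin_space T1 q1" "coin_space T2 q2" ..
  interpret HC: pair_prob_space "hash_space U" "coin_space T1 q1 \<Otimes>\<^sub>M coin_space T2 q2" ..
  have gk: "integrable (coin_space T1 q1 \<Otimes>\<^sub>M coin_space T2 q2) (\<lambda>z. g (fst z) * k (snd z))"
    by (rule C.integrable_pair_measure_mult[OF g k])
  have split: "(\<lambda>(h, c1, c2). f h * g c1 * k c2) = (\<lambda>z. f (fst z) * (g (fst (snd z)) * k (snd (snd z))))"
    by (auto simp: mult.assoc)
  show "integrable (ubs_space U T1 T2 q1 q2) (\<lambda>(h, c1, c2). f h * g c1 * k c2)"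
    unfolding ubs_space_eq split using HC.integrable_pair_measure_mult[OF f gk] by simp
  show "(\<integral>(h, c1, c2). f h * g c1 * k c2 \<partial>ubs_space U T1 T2 q1 q2) =
      integral\<^sup>L (hash_space U) f * integral\<^sup>L (coin_space T1 q1) g * integral\<^sup>L (coin_space T2 q2) k"
    unfolding ubs_space_eq split
    using HC.integral_pair_measure_mult[OF f gk] C.integral_pair_measure_mult[OF g k] by simp
qed

lemma integral_uniform_indicator_lessThan:
  assumes "0 \<le> p" "p \<le> 1"
  shows "(\<integral>y. indicator {..<p} y \<partial>uniform_measure lborel {0..1}) = (p::real)"
proof -
  have "{0..1} \<inter> {..<p} = {0..<p}" using assms by auto
  then show ?thesis using assms by simp
qed

lemma
  assumes U: "finite U" "v \<in> U" "w \<in> U" and p: "0 \<le> p" "p \<le> 1"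
  shows integrable_hash_indicator:
      "integrable (hash_space U) (\<lambda>h. indicator {..<p} (h v) :: real)"
    and integral_hash_indicator: "(\<integral>h. indicator {..<p} (h v) \<partial>hash_space U) = (p::real)"
    and integrable_hash_indicator_mult:
      "integrable (hash_space U) (\<lambda>h. indicator {..<p} (h v) * indicator {..<p} (h w) :: real)"
    and integral_hash_indicator_mult:
      "(\<integral>h. indicator {..<p} (h v) * indicator {..<p} (h w) \<partial>hash_space U) =
        (if v = w then p else p\<^sup>2 :: real)"
proof -
  let ?M = "uniform_measure lborel {0..1::real}"
  have M: "prob_space ?M" by (intro prob_space_uniform_measure) auto
  interpret prob_space ?M by (rule M)
  have ind: "integrable ?M (\<lambda>y. indicator {..<p} y :: real)"
    by (intro integrable_const_bound[where B=1]) (auto simp: indicator_def)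
  have square: "(indicator {..<p} y)\<^sup>2 = (indicator {..<p} y :: real)" for y
    by (simp add: indicator_def)
  have ind2: "integrable ?M (\<lambda>y. (indicator {..<p} y)\<^sup>2 :: real)"
    using ind by (simp only: square)
  show "integrable (hash_space U) (\<lambda>h. indicator {..<p} (h v) :: real)"
    unfolding hash_space_def by (rule integrable_PiM_coordinate[OF M U(1,2) ind])
  show "(\<integral>h. indicator {..<p} (h v) \<partial>hash_space U) = (p::real)"
    unfolding hash_space_def integral_PiM_coordinate[OF M U(1,2) ind]
    by (rule integral_uniform_indicator_lessThan[OF p])
  show "integrable (hash_space U) (\<lambda>h. indicator {..<p} (h v) * indicator {..<p} (h w) :: real)"
    unfolding hash_space_def by (rule integrable_PiM_coordinate_mult[OF M U ind ind2])
  show "(\<integral>h. indicator {..<p} (h v) * indicator {..<p} (h w) \<partial>hash_space U) =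
      (if v = w then p else p\<^sup>2 :: real)"
    unfolding hash_space_def integral_PiM_coordinate_mult[OF M U ind ind2]
    using integral_uniform_indicator_lessThan[OF p] by (simp only: square)
qed

lemma real_freq_filter_eq_sum:
  assumes "finite T"
  shows "real (freq {t \<in> T. c t} J v) = (\<Sum>t\<in>{t \<in> T. J t = v}. of_bool (c t))"
proof -
  have "{t \<in> {t \<in> T. c t}. J t = v} = {t \<in> T. J t = v} \<inter> {t. c t}" by auto
  then show ?thesis using assms by (simp add: freq_def)
qed

lemma
  assumes T: "finite T" and q: "0 \<le> q" "q \<le> 1"
  shows integrable_coin_freq: "integrable (coin_space T q) (\<lambda>c. real (freq {t \<in> T. c t} J v))"
    and integral_coin_freq:
      "(\<integral>c. real (freq {t \<in> T. c t} J v) \<partial>coin_space T q) = q * real (freq T J v)"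
    and integrable_coin_freq_mult:
      "integrable (coin_space T q) (\<lambda>c. real (freq {t \<in> T. c t} J v) * real (freq {t \<in> T. c t} J w))"
    and integral_coin_freq_mult:
      "(\<integral>c. real (freq {t \<in> T. c t} J v) * real (freq {t \<in> T. c t} J w) \<partial>coin_space T q) =
        q\<^sup>2 * real (freq T J v) * real (freq T J w) + (if v = w then q * (1 - q) * real (freq T J v) else 0)"
proof -
  let ?B = "measure_pmf (bernoulli_pmf q)"
  have B: "prob_space ?B" by (rule prob_space_measure_pmf)
  have coin: "integrable ?B (\<lambda>b. of_bool b :: real)" "integrable ?B (\<lambda>b. (of_bool b)\<^sup>2 :: real)"
    by (simp_all add: integrable_measure_pmf_finite)
  have S: "{t \<in> T. J t = v} \<subseteq> T" "{t \<in> T. J t = w} \<subseteq> T" by auto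
  have card: "card {t \<in> T. J t = u} = freq T J u" for u by (simp add: freq_def)
  have card_Int: "card ({t \<in> T. J t = v} \<inter> {t \<in> T. J t = w}) = (if v = w then freq T J v else 0)"
    by (auto simp: freq_def card_eq_0_iff)
  show "integrable (coin_space T q) (\<lambda>c. real (freq {t \<in> T. c t} J v))"
    unfolding coin_space_def real_freq_filter_eq_sum[OF T]
    using integrable_PiM_coordinate[OF B T _ coin(1)] by auto
  show "(\<integral>c. real (freq {t \<in> T. c t} J v) \<partial>coin_space T q) = q * real (freq T J v)"
    unfolding coin_space_def real_freq_filter_eq_sum[OF T]
    using integrable_PiM_coordinate[OF B T _ coin(1)] integral_PiM_coordinate[OF B T _ coin(1)] q
    by (simp add: integral_sum card)
  show "integrable (coin_space T q) (\<lambda>c. real (freq {t \<in> T. c t} J v) * real (freq {t \<in> T. c t} J w))"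
    unfolding coin_space_def real_freq_filter_eq_sum[OF T]
    by (rule integrable_PiM_sum_coordinates_mult[OF B T S coin])
  show "(\<integral>c. real (freq {t \<in> T. c t} J v) * real (freq {t \<in> T. c t} J w) \<partial>coin_space T q) =
      q\<^sup>2 * real (freq T J v) * real (freq T J w) + (if v = w then q * (1 - q) * real (freq T J v) else 0)"
    unfolding coin_space_def real_freq_filter_eq_sum[OF T] integral_PiM_sum_coordinates_mult[OF B T S coin]
    using q by (simp add: card card_Int power2_eq_square algebra_simps)
qed

lemma join_card_eq_sum_freq:
  assumes U: "finite U" and S: "finite S1" "finite S2" and J: "J1 ` S1 \<subseteq> U" "J2 ` S2 \<subseteq> U"
  shows "join_card S1 J1 S2 J2 = (\<Sum>v\<in>U. freq S1 J1 v * freq S2 J2 v)"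
proof -
  have "{(t1, t2) \<in> S1 \<times> S2. J1 t1 = J2 t2} = (\<Union>v\<in>U. {t \<in> S1. J1 t = v} \<times> {t \<in> S2. J2 t = v})"
    using J by auto
  then have "join_card S1 J1 S2 J2 = card (\<Union>v\<in>U. {t \<in> S1. J1 t = v} \<times> {t \<in> S2. J2 t = v})"
    by (simp add: join_card_def)
  also have "\<dots> = (\<Sum>v\<in>U. card ({t \<in> S1. J1 t = v} \<times> {t \<in> S2. J2 t = v}))"
    using U S by (intro card_UN_disjoint) auto
  finally show ?thesis by (simp add: freq_def card_cartesian_product)
qed

lemma freq_ubs: "freq (ubs T J p h c) J v = (if h v < p then freq {t \<in> T. c t} J v else 0)"
  by (auto simp: freq_def ubs_def card_eq_0_iff intro: arg_cong[where f=card])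

definition join_term ::
  "'r1 set \<Rightarrow> ('r1 \<Rightarrow> 'u) \<Rightarrow> 'r2 set \<Rightarrow> ('r2 \<Rightarrow> 'u) \<Rightarrow> real \<Rightarrow> 'u \<Rightarrow>
     ('u \<Rightarrow> real) \<times> ('r1 \<Rightarrow> bool) \<times> ('r2 \<Rightarrow> bool) \<Rightarrow> real" where
  "join_term T1 J1 T2 J2 p v = (\<lambda>(h, c1, c2).
     indicator {..<p} (h v) * real (freq {t \<in> T1. c1 t} J1 v) * real (freq {t \<in> T2. c2 t} J2 v))"

lemma join_card_ubs_eq_sum_join_term:
  assumes U: "finite U" and T: "finite T1" "finite T2" and J: "J1 ` T1 \<subseteq> U" "J2 ` T2 \<subseteq> U"
  shows "real (join_card (ubs T1 J1 p1 h c1) J1 (ubs T2 J2 p2 h c2) J2) =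
    (\<Sum>v\<in>U. join_term T1 J1 T2 J2 (min p1 p2) v (h, c1, c2))"
proof -
  have "ubs T1 J1 p1 h c1 \<subseteq> T1" "ubs T2 J2 p2 h c2 \<subseteq> T2" by (auto simp: ubs_def)
  then have "join_card (ubs T1 J1 p1 h c1) J1 (ubs T2 J2 p2 h c2) J2 =
      (\<Sum>v\<in>U. freq (ubs T1 J1 p1 h c1) J1 v * freq (ubs T2 J2 p2 h c2) J2 v)"
    using U T J by (intro join_card_eq_sum_freq) (meson finite_subset image_mono subset_trans)+
  then show ?thesis by (auto simp: join_term_def freq_ubs indicator_def intro!: sum.cong)
qed

lemma
  assumes U: "finite U" "v \<in> U" "w \<in> U" and T: "finite T1" "finite T2"
    and p: "0 \<le> p" "p \<le> 1" and q1: "0 \<le> q1" "q1 \<le> 1" and q2: "0 \<le> q2" "q2 \<le> 1"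
  shows integrable_join_term: "integrable (ubs_space U T1 T2 q1 q2) (join_term T1 J1 T2 J2 p v)"
    and integral_join_term: "(\<integral>\<omega>. join_term T1 J1 T2 J2 p v \<omega> \<partial>ubs_space U T1 T2 q1 q2) =
      p * q1 * q2 * real (freq T1 J1 v) * real (freq T2 J2 v)"
    and integrable_join_term_mult: "integrable (ubs_space U T1 T2 q1 q2)
      (\<lambda>\<omega>. join_term T1 J1 T2 J2 p v \<omega> * join_term T1 J1 T2 J2 p w \<omega>)"
    and integral_join_term_mult:
      "(\<integral>\<omega>. join_term T1 J1 T2 J2 p v \<omega> * join_term T1 J1 T2 J2 p w \<omega> \<partial>ubs_space U T1 T2 q1 q2) =
        (if v = w then p else p\<^sup>2)
        * (q1\<^sup>2 * real (freq T1 J1 v) * real (freq T1 J1 w)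
           + (if v = w then q1 * (1 - q1) * real (freq T1 J1 v) else 0))
        * (q2\<^sup>2 * real (freq T2 J2 v) * real (freq T2 J2 w)
           + (if v = w then q2 * (1 - q2) * real (freq T2 J2 v) else 0))"
proof -
  note hash = integrable_hash_indicator[OF U p] integral_hash_indicator[OF U p]
    integrable_hash_indicator_mult[OF U p] integral_hash_indicator_mult[OF U p]
  note coins1 = integrable_coin_freq[OF T(1) q1] integral_coin_freq[OF T(1) q1]
    integrable_coin_freq_mult[OF T(1) q1] integral_coin_freq_mult[OF T(1) q1]
  note coins2 = integrable_coin_freq[OF T(2) q2] integral_coin_freq[OF T(2) q2]
    integrable_coin_freq_mult[OF T(2) q2] integral_coin_freq_mult[OF T(2) q2]
  have product: "(\<lambda>\<omega>. join_term T1 J1 T2 J2 p v \<omega> * join_term T1 J1 T2 J2 p w \<omega>) =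
      (\<lambda>(h, c1, c2). (indicator {..<p} (h v) * indicator {..<p} (h w))
        * (real (freq {t \<in> T1. c1 t} J1 v) * real (freq {t \<in> T1. c1 t} J1 w))
        * (real (freq {t \<in> T2. c2 t} J2 v) * real (freq {t \<in> T2. c2 t} J2 w)))"
    by (auto simp: join_term_def)
  show "integrable (ubs_space U T1 T2 q1 q2) (join_term T1 J1 T2 J2 p v)"
    unfolding join_term_def by (rule integrable_ubs_space_mult[OF hash(1) coins1(1) coins2(1)])
  show "(\<integral>\<omega>. join_term T1 J1 T2 J2 p v \<omega> \<partial>ubs_space U T1 T2 q1 q2) =
      p * q1 * q2 * real (freq T1 J1 v) * real (freq T2 J2 v)"
    unfolding join_term_def integral_ubs_space_mult[OF hash(1) coins1(1) coins2(1)]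
    by (simp add: hash coins1 coins2)
  show "integrable (ubs_space U T1 T2 q1 q2)
      (\<lambda>\<omega>. join_term T1 J1 T2 J2 p v \<omega> * join_term T1 J1 T2 J2 p w \<omega>)"
    unfolding product by (rule integrable_ubs_space_mult[OF hash(3) coins1(3) coins2(3)])
  show "(\<integral>\<omega>. join_term T1 J1 T2 J2 p v \<omega> * join_term T1 J1 T2 J2 p w \<omega> \<partial>ubs_space U T1 T2 q1 q2) =
        (if v = w then p else p\<^sup>2)
        * (q1\<^sup>2 * real (freq T1 J1 v) * real (freq T1 J1 w)
           + (if v = w then q1 * (1 - q1) * real (freq T1 J1 v) else 0))
        * (q2\<^sup>2 * real (freq T2 J2 v) * real (freq T2 J2 w)
           + (if v = w then q2 * (1 - q2) * real (freq T2 J2 v) else 0))"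
    unfolding product integral_ubs_space_mult[OF hash(3) coins1(3) coins2(3)]
    by (simp only: hash coins1 coins2)
qed

lemma variance_join_term:
  fixes J1 :: "'r1 \<Rightarrow> 'u" and J2 :: "'r2 \<Rightarrow> 'u"
  assumes "finite U" "v \<in> U" "finite T1" "finite T2"
    and "0 \<le> p" "p \<le> 1" "0 \<le> q1" "q1 \<le> 1" "0 \<le> q2" "q2 \<le> 1"
  defines "a \<equiv> real (freq T1 J1 v)" and "b \<equiv> real (freq T2 J2 v)"
  shows "prob_space.variance (ubs_space U T1 T2 q1 q2) (join_term T1 J1 T2 J2 p v) =
    p * (q1\<^sup>2 * a\<^sup>2 + q1 * (1 - q1) * a) * (q2\<^sup>2 * b\<^sup>2 + q2 * (1 - q2) * b) - (p * q1 * q2 * a * b)\<^sup>2"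
proof -
  interpret prob_space "ubs_space U T1 T2 q1 q2" by (rule prob_space_ubs_space)
  note moments = integrable_join_term[OF assms(1,2,2,3-10)]
    integral_join_term[OF assms(1,2,2,3-10)]
    integrable_join_term_mult[OF assms(1,2,2,3-10)]
    integral_join_term_mult[OF assms(1,2,2,3-10)]
  have square: "integrable (ubs_space U T1 T2 q1 q2) (\<lambda>\<omega>. (join_term T1 J1 T2 J2 p v \<omega>)\<^sup>2)"
    using moments(3) by (simp add: power2_eq_square)
  have second_moment: "expectation (\<lambda>\<omega>. (join_term T1 J1 T2 J2 p v \<omega>)\<^sup>2) =
      p * (q1\<^sup>2 * a\<^sup>2 + q1 * (1 - q1) * a) * (q2\<^sup>2 * b\<^sup>2 + q2 * (1 - q2) * b)"
    using moments(4) by (simp add: power2_eq_square a_def b_def ac_simps)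
  have "variance (join_term T1 J1 T2 J2 p v) =
      expectation (\<lambda>\<omega>. (join_term T1 J1 T2 J2 p v \<omega>)\<^sup>2) - (expectation (join_term T1 J1 T2 J2 p v))\<^sup>2"
    by (rule variance_eq[OF moments(1) square])
  also have "\<dots> = p * (q1\<^sup>2 * a\<^sup>2 + q1 * (1 - q1) * a) * (q2\<^sup>2 * b\<^sup>2 + q2 * (1 - q2) * b)
      - (p * q1 * q2 * a * b)\<^sup>2"
    unfolding second_moment moments(2) a_def b_def ..
  finally show ?thesis .
qed

theorem lemma1:
  fixes U :: "'u set" and T1 :: "'r1 set" and T2 :: "'r2 set"
    and J1 :: "'r1 \<Rightarrow> 'u" and J2 :: "'r2 \<Rightarrow> 'u"
    and p1 q1 p2 q2 :: real
  assumes "finite U" and "finite T1" and "finite T2"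
    and "J1 ` T1 \<subseteq> U" and "J2 ` T2 \<subseteq> U"
    and "0 < p1" "p1 \<le> 1" "0 < q1" "q1 \<le> 1"
    and "0 < p2" "p2 \<le> 1" "0 < q2" "q2 \<le> 1"
  shows "prob_space.variance (ubs_space U T1 T2 q1 q2)
           (\<lambda>(h, c1, c2). real (join_card (ubs T1 J1 p1 h c1) J1 (ubs T2 J2 p2 h c2) J2)
                           / (min p1 p2 * q1 * q2))
         = (1 - min p1 p2) / min p1 p2 * gamma U (freq T1 J1) (freq T2 J2) 2 2
           + (1 - q2) / (min p1 p2 * q2) * gamma U (freq T1 J1) (freq T2 J2) 2 1
           + (1 - q1) / (min p1 p2 * q1) * gamma U (freq T1 J1) (freq T2 J2) 1 2
           + (1 - q1) * (1 - q2) / (min p1 p2 * q1 * q2) * gamma U (freq T1 J1) (freq T2 J2) 1 1"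
proof -
  define p where "p = min p1 p2"
  have pos: "0 < p" "0 < q1" "0 < q2"
    and bounds: "0 \<le> p" "p \<le> 1" "0 \<le> q1" "q1 \<le> 1" "0 \<le> q2" "q2 \<le> 1"
    using assms by (auto simp: p_def)
  interpret prob_space "ubs_space U T1 T2 q1 q2" by (rule prob_space_ubs_space)
  let ?Y = "join_term T1 J1 T2 J2 p"
    and ?a = "\<lambda>v. real (freq T1 J1 v)" and ?b = "\<lambda>v. real (freq T2 J2 v)"
  have estimator: "(\<lambda>(h, c1, c2). real (join_card (ubs T1 J1 p1 h c1) J1 (ubs T2 J2 p2 h c2) J2)
      / (p * q1 * q2)) = (\<lambda>\<omega>. (\<Sum>v\<in>U. ?Y v \<omega>) / (p * q1 * q2))"
    using join_card_ubs_eq_sum_join_term[OF assms(1-5)] by (auto simp: p_def)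
  have "variance (\<lambda>\<omega>. \<Sum>v\<in>U. ?Y v \<omega>) = (\<Sum>v\<in>U. variance (?Y v))"
    using assms(1-3) bounds by (intro variance_sum_pairwise_uncorrelated)
      (simp_all add: integrable_join_term integrable_join_term_mult integral_join_term
        integral_join_term_mult power2_eq_square)
  moreover have "variance (?Y v) / (p * q1 * q2)\<^sup>2 =
      (1 - p) / p * (?a v ^ 2 * ?b v ^ 2) + (1 - q2) / (p * q2) * (?a v ^ 2 * ?b v ^ 1)
      + (1 - q1) / (p * q1) * (?a v ^ 1 * ?b v ^ 2)
      + (1 - q1) * (1 - q2) / (p * q1 * q2) * (?a v ^ 1 * ?b v ^ 1)"
    if "v \<in> U" for v
    unfolding variance_join_term[OF assms(1) that assms(2,3) bounds]
    using pos by (simp add: field_simps power2_eq_square)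
  ultimately show ?thesis
    unfolding p_def[symmetric] estimator variance_divide
    by (simp add: sum_divide_distrib gamma_def sum.distrib sum_distrib_left)
qed

end
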